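(* Let $T$ be a compact metric space, let $\eta$ be a sample-continuous max-infinitely divisible process on $T$ with vertex function identically $0$ and exponent measure $\mu$, and $\Phi$ a Poisson random measure on $\mathbb{C}_0$ with intensity $\mu$ with $\eta=\max(\Phi)$. Let $K\subset T$ be closed. Then the $K$-extremal point measure $\Phi_K^+$ is the unique sub-point measure $\tilde\Phi$ of $\Phi$ such that $$\tilde\Phi\in C_K^+\quad\text{and}\quad\Phi-\tilde\Phi\in C_K^-(\max(\tilde\Phi)).$$
   Context: $\mathbb{C}_0$ is the set of continuous $f:T\to[0,\infty)$ not identically zero (sup norm). $M_p(\mathbb{C}_0)$ is the set of point measures $M=\sum_{i\in I}\delta_{f_i}$ on $\mathbb{C}_0$ with $\{i:\|f_i\|>\varepsilon\}$ finite for all $\varepsilon>0$; $[M]$ is its set of atoms and $\max(M)(s)=\max\{f(s):f\in[M]\}$ ($0$ if $M=0$). $M_1$ is a sub-point measure of $M_2$ if $M_2-M_1\in M_p(\mathbb{C}_0)$. The vertex function is $h(t)=\sup\{x:\mathbb P(\eta(t)\ge x)=1\}$; the exponent measure $\mu$ is a Borel measure on $\mathbb{C}_0$ with $\mu(\{\|f\|>\varepsilon\})<\infty$ for all $\varepsilon>0$ and $\mathbb P[\eta(K_i)<x_i,i\le n]=\exp[-\mu(\cup_i\{f(K_i)\ge x_i\})]$. For $f,g$ on $K$: $f<_Kg$ iff $f(s)<g(s)$ for all $s\in K$; $f\not<_Kg$ otherwise. $\Phi_K^+$ is the restriction of $\Phi$ to its atoms $\phi$ with $\phi\not<_K\eta$.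 $C_K^+=\{M:\forall f\in[M],\ f\not<_K\max(M)\}$ and $C_K^-(g)=\{M:\forall f\in[M],\ f<_Kg\}$. *)

theory Defs
  imports "HOL-Analysis.Analysis" "HOL-Probability.Probability"
begin

(* Continuous functions on the compact metric space T (modelled as the whole type 'a,
  with compact UNIV) are bounded continuous functions 'a <Rightarrow><^sub>C real, carrying the sup norm. *)

definition C0 :: "('a::metric_space \<Rightarrow>\<^sub>C real) set" where
  "C0 = {f. (\<forall>t. 0 \<le> apply_bcontfun f t) \<and> f \<noteq> 0}"

(* A point measure on C0 is represented by its multiplicity function. *)
type_synonym 'a pmeas = "('a \<Rightarrow>\<^sub>C real) \<Rightarrow> nat"

definition atoms :: "'a::metric_space pmeas \<Rightarrow> ('a \<Rightarrow>\<^sub>C real) set" where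
  "atoms M = {f. 0 < M f}"

definition Mp :: "'a::metric_space pmeas set" where
  "Mp = {M. atoms M \<subseteq> C0 \<and> (\<forall>\<epsilon>>0. finite {f \<in> atoms M. norm f > \<epsilon>})}"

definition maxM :: "'a::metric_space pmeas \<Rightarrow> 'a \<Rightarrow> real" where
  "maxM M s = (if atoms M = {} then 0 else (GREATEST x. x \<in> (\<lambda>f. apply_bcontfun f s) ` atoms M))"

definition sub_pm :: "'a::metric_space pmeas \<Rightarrow> 'a pmeas \<Rightarrow> bool" where
  "sub_pm M1 M2 \<longleftrightarrow> M1 \<in> Mp \<and> M1 \<le> M2 \<and> (\<lambda>f. M2 f - M1 f) \<in> Mp"

definition lessK :: "'a set \<Rightarrow> ('a \<Rightarrow> real) \<Rightarrow> ('a \<Rightarrow> real) \<Rightarrow> bool" where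
  "lessK K f g \<longleftrightarrow> (\<forall>s\<in>K. f s < g s)"

definition extremal_part :: "'a set \<Rightarrow> ('a \<Rightarrow> real) \<Rightarrow> 'a::metric_space pmeas \<Rightarrow> 'a pmeas" where
  "extremal_part K eta M = (\<lambda>\<phi>. if \<not> lessK K (apply_bcontfun \<phi>) eta then M \<phi> else 0)"

definition CKplus :: "'a set \<Rightarrow> 'a::metric_space pmeas set" where
  "CKplus K = {M. \<forall>f\<in>atoms M. \<not> lessK K (apply_bcontfun f) (maxM M)}"

definition CKminus :: "'a set \<Rightarrow> ('a \<Rightarrow> real) \<Rightarrow> 'a::metric_space pmeas set" where
  "CKminus K g = {M. \<forall>f\<in>atoms M. lessK K (apply_bcontfun f) g}"

definition supK :: "('a::metric_space \<Rightarrow>\<^sub>C real) \<Rightarrow> 'a set \<Rightarrow> real" where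
  "supK f K = Sup (apply_bcontfun f ` K)"

(* Max-infinite divisibility of a process, via its finite-dimensional distributions:
  for every finite J and n <ge> 1, F_J^(1/n) is again a distribution function. *)
definition max_id :: "'b measure \<Rightarrow> ('b \<Rightarrow> ('a::metric_space \<Rightarrow>\<^sub>C real)) \<Rightarrow> bool" where
  "max_id P eta \<longleftrightarrow> (\<forall>J n. finite J \<and> J \<noteq> {} \<and> n \<ge> (1::nat) \<longrightarrow>
     (\<exists>Q. prob_space Q \<and> sets Q = sets (PiM J (\<lambda>_. borel :: real measure)) \<and>
        (\<forall>x. measure Q {y \<in> space (PiM J (\<lambda>_. borel)). \<forall>j\<in>J. y j \<le> x j}
              = (measure P {\<omega> \<in> space P. \<forall>j\<in>J. apply_bcontfun (eta \<omega>) j \<le> x j}) powr (1 / real n))))"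

definition vertex :: "'b measure \<Rightarrow> ('b \<Rightarrow> ('a::metric_space \<Rightarrow>\<^sub>C real)) \<Rightarrow> 'a \<Rightarrow> ereal" where
  "vertex P eta t = Sup {ereal x | x. measure P {\<omega> \<in> space P. apply_bcontfun (eta \<omega>) t \<ge> x} = 1}"

definition exponent_measure :: "'b measure \<Rightarrow> ('b \<Rightarrow> ('a::metric_space \<Rightarrow>\<^sub>C real)) \<Rightarrow> ('a \<Rightarrow>\<^sub>C real) measure \<Rightarrow> bool" where
  "exponent_measure P eta \<mu> \<longleftrightarrow>
     sets \<mu> = sets borel \<and> emeasure \<mu> (UNIV - C0) = 0 \<and>
     (\<forall>\<epsilon>>0. emeasure \<mu> {f \<in> C0. norm f > \<epsilon>} < \<infinity>) \<and>
     (\<forall>(n::nat) Ks xs. (\<forall>i<n. compact (Ks i) \<and> Ks i \<noteq> {} \<and> (0::real) < xs i) \<longrightarrow>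
        measure P {\<omega> \<in> space P. \<forall>i<n. supK (eta \<omega>) (Ks i) < xs i}
          = exp (- measure \<mu> (\<Union>i<n. {f \<in> C0. supK f (Ks i) \<ge> xs i})))"

definition cnt :: "'a::metric_space pmeas \<Rightarrow> ('a \<Rightarrow>\<^sub>C real) set \<Rightarrow> ennreal" where
  "cnt M A = (\<integral>\<^sup>+ f. of_nat (M f) * indicator A f \<partial>count_space UNIV)"

definition poisson_random_measure ::
  "'b measure \<Rightarrow> ('b \<Rightarrow> 'a::metric_space pmeas) \<Rightarrow> ('a \<Rightarrow>\<^sub>C real) measure \<Rightarrow> bool" where
  "poisson_random_measure P Phi \<mu> \<longleftrightarrow>
     (\<forall>\<omega>\<in>space P. Phi \<omega> \<in> Mp) \<and>
     (\<forall>A\<in>sets \<mu>. (\<lambda>\<omega>. cnt (Phi \<omega>) A) \<in> borel_measurable P) \<and>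
     (\<forall>A\<in>sets \<mu>. emeasure \<mu> A < \<infinity> \<longrightarrow> (\<forall>k::nat.
        measure P {\<omega> \<in> space P. cnt (Phi \<omega>) A = of_nat k}
          = exp (- measure \<mu> A) * measure \<mu> A ^ k / fact k)) \<and>
     (\<forall>A\<in>sets \<mu>. emeasure \<mu> A = \<infinity> \<longrightarrow> (AE \<omega> in P. cnt (Phi \<omega>) A = \<infinity>)) \<and>
     (\<forall>(n::nat) A. (\<forall>i<n. A i \<in> sets \<mu>) \<and> disjoint_family_on A {..<n} \<longrightarrow>
        prob_space.indep_vars P (\<lambda>_. borel) (\<lambda>i \<omega>. cnt (Phi \<omega>) (A i)) {..<n})"

end

theory Submission
  imports Defs
begin

text \<open>The statement is pathwise: almost surely \<open>\<Phi> \<in> Mp\<close> and \<open>\<eta> = max \<Phi>\<close>, and for every such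
  point measure the claim is deterministic. Since only finitely many atoms exceed any positive level,
  \<open>max M (s)\<close> is attained by an atom. Hence on \<open>K\<close> the maximum is carried by the atoms not
  dominated by \<open>max M\<close> on \<open>K\<close>, which gives existence. Conversely, for an admissible \<open>\<Psi>\<close> the atom
  attaining \<open>max M (s)\<close> lies either in \<open>\<Psi>\<close> or strictly below \<open>max \<Psi>\<close>, so \<open>max \<Psi> = max M\<close> on \<open>K\<close>,
  and the two conditions then pin down which atoms belong to \<open>\<Psi>\<close>.\<close>

lemma Mp_atom_nonneg:
  assumes "M \<in> Mp" "f \<in> atoms M"
  shows "0 \<le> apply_bcontfun f s"
  using assms unfolding Mp_def C0_def by auto

lemma Mp_atoms_subset:
  assumes M: "M \<in> Mp" and sub: "atoms N \<subseteq> atoms M"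
  shows "N \<in> Mp"
proof -
  have "finite {f \<in> atoms N. norm f > e}" if "e > 0" for e
    using M that sub unfolding Mp_def by (auto elim!: rev_finite_subset)
  then show ?thesis
    using M sub unfolding Mp_def by auto
qed

lemma Mp_exists_max_atom:
  assumes M: "M \<in> Mp" and ne: "atoms M \<noteq> {}"
  shows "\<exists>g\<in>atoms M. \<forall>f\<in>atoms M. f s \<le> g s"
proof (cases "\<exists>f\<in>atoms M. f s > 0")
  case True
  then obtain f1 where f1: "f1 \<in> atoms M" "f1 s > 0" by auto
  \<comment> \<open>Only the finitely many atoms of norm above \<open>f1 s / 2\<close> can compete with \<open>f1\<close> at \<open>s\<close>.\<close>
  define A where "A = {f \<in> atoms M. norm f > f1 s / 2}"
  have "\<forall>\<epsilon>>0. finite {f \<in> atoms M. norm f > \<epsilon>}"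
    using M unfolding Mp_def by blast
  then have "finite A"
    using f1(2) unfolding A_def by (meson half_gt_zero)
  moreover have f1A: "f1 \<in> A"
    using f1 norm_bounded[of f1 s] unfolding A_def by auto
  ultimately have "Max ((\<lambda>f. apply_bcontfun f s) ` A) \<in> (\<lambda>f. apply_bcontfun f s) ` A"
    by (intro Max_in) auto
  then obtain g where "g \<in> A" "g s = Max ((\<lambda>f. apply_bcontfun f s) ` A)"
    by (metis imageE)
  with \<open>finite A\<close> have g: "g \<in> A" "\<forall>f\<in>A. f s \<le> g s"
    by auto
  have "f s \<le> g s" if f: "f \<in> atoms M" for f
  proof (cases "f s > f1 s / 2")
    case True
    then have "f \<in> A" using f norm_bounded[of f s] unfolding A_def by auto
    then show ?thesis using g by auto
  next
    case False
    then show ?thesis using g f1A f1(2) by fastforce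
  qed
  then show ?thesis using g unfolding A_def by auto
next
  case False
  then have "\<forall>f\<in>atoms M. f s = 0"
    using Mp_atom_nonneg[OF M] by (meson linorder_not_le order_antisym)
  then show ?thesis using ne by auto
qed

lemma maxM_eq_max_atom:
  assumes "g \<in> atoms M" "\<forall>f\<in>atoms M. f s \<le> g s"
  shows "maxM M s = g s"
  unfolding maxM_def using assms by (auto intro!: Greatest_equality)

lemma maxM_attained:
  assumes M: "M \<in> Mp" and ne: "atoms M \<noteq> {}"
  obtains g where "g \<in> atoms M" "g s = maxM M s"
  using Mp_exists_max_atom[OF M ne] maxM_eq_max_atom by metis

lemma maxM_upper:
  assumes M: "M \<in> Mp" and f: "f \<in> atoms M"
  shows "f s \<le> maxM M s"
proof -
  obtain g where g: "g \<in> atoms M" "\<forall>f\<in>atoms M. f s \<le> g s"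
    using Mp_exists_max_atom[OF M] f by blast
  then show ?thesis using maxM_eq_max_atom[OF g] f by auto
qed

lemma maxM_nonneg:
  assumes "M \<in> Mp"
  shows "0 \<le> maxM M s"
proof (cases "atoms M = {}")
  case True
  then show ?thesis by (simp add: maxM_def)
next
  case False
  then show ?thesis
    using maxM_attained[OF assms] Mp_atom_nonneg[OF assms] by metis
qed

lemma maxM_mono_atoms:
  assumes N: "N \<in> Mp" and M: "M \<in> Mp" and sub: "atoms N \<subseteq> atoms M"
  shows "maxM N s \<le> maxM M s"
proof (cases "atoms N = {}")
  case True
  then show ?thesis using maxM_nonneg[OF M] by (simp add: maxM_def)
next
  case False
  then obtain g where "g \<in> atoms N" "g s = maxM N s"
    using maxM_attained[OF N] by blast
  then show ?thesis using maxM_upper[OF M, of g s] sub by auto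
qed

lemma sub_pm_atoms_subset:
  assumes "sub_pm N M"
  shows "atoms N \<subseteq> atoms M"
  using assms unfolding sub_pm_def atoms_def le_fun_def by (auto dest: spec order.strict_trans2)

lemma atoms_extremal_part:
  "atoms (extremal_part K eta M) = {f \<in> atoms M. \<not> lessK K (apply_bcontfun f) eta}"
  unfolding atoms_def extremal_part_def by auto

lemma sub_pm_extremal_part:
  assumes M: "M \<in> Mp"
  shows "sub_pm (extremal_part K eta M) M"
proof -
  have "atoms (\<lambda>f. M f - extremal_part K eta M f) \<subseteq> atoms M"
    unfolding extremal_part_def atoms_def by auto
  then show ?thesis
    using Mp_atoms_subset[OF M] atoms_extremal_part[of K eta M]
    unfolding sub_pm_def extremal_part_def le_fun_def by auto
qed

lemma Mp_extremal_part:
  assumes "M \<in> Mp"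
  shows "extremal_part K eta M \<in> Mp"
  using sub_pm_extremal_part[OF assms] unfolding sub_pm_def by blast

lemma maxM_extremal_part_le:
  assumes M: "M \<in> Mp"
  shows "maxM (extremal_part K (maxM M) M) s \<le> maxM M s"
  by (rule maxM_mono_atoms[OF Mp_extremal_part[OF M] M]) (auto simp: atoms_extremal_part)

lemma extremal_part_CKplus:
  assumes M: "M \<in> Mp"
  shows "extremal_part K (maxM M) M \<in> CKplus K"
  unfolding CKplus_def
proof safe
  let ?P = "extremal_part K (maxM M) M"
  fix f assume f: "f \<in> atoms ?P" and less: "lessK K (apply_bcontfun f) (maxM ?P)"
  then obtain s where "s \<in> K" "maxM M s \<le> f s"
    unfolding atoms_extremal_part lessK_def by (auto simp: not_less)
  moreover have "maxM ?P s \<le> maxM M s"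
    using maxM_extremal_part_le[OF M] .
  ultimately show False using less unfolding lessK_def by fastforce
qed

lemma maxM_extremal_part_eq:
  assumes M: "M \<in> Mp" and s: "s \<in> K" and ne: "atoms M \<noteq> {}"
  shows "maxM (extremal_part K (maxM M) M) s = maxM M s"
proof -
  obtain g where g: "g \<in> atoms M" "g s = maxM M s"
    using maxM_attained[OF M ne] by blast
  then have "g \<in> atoms (extremal_part K (maxM M) M)"
    using s unfolding atoms_extremal_part lessK_def by force
  then have "maxM M s \<le> maxM (extremal_part K (maxM M) M) s"
    using maxM_upper[OF Mp_extremal_part[OF M], where f = g and s = s] g by simp
  moreover have "maxM (extremal_part K (maxM M) M) s \<le> maxM M s"
    using maxM_extremal_part_le[OF M] .
  ultimately show ?thesis by simp
qed

lemma diff_extremal_part_CKminus: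
  assumes M: "M \<in> Mp"
  shows "(\<lambda>f. M f - extremal_part K (maxM M) M f) \<in> CKminus K (maxM (extremal_part K (maxM M) M))"
  unfolding CKminus_def
proof safe
  fix f assume "f \<in> atoms (\<lambda>f. M f - extremal_part K (maxM M) M f)"
  then have f: "f \<in> atoms M" "lessK K (apply_bcontfun f) (maxM M)"
    unfolding atoms_def extremal_part_def by (auto split: if_splits)
  moreover have "atoms M \<noteq> {}" using f by auto
  ultimately show "lessK K (apply_bcontfun f) (maxM (extremal_part K (maxM M) M))"
    using maxM_extremal_part_eq[OF M] unfolding lessK_def by auto
qed

lemma maxM_eq_if_CKminus_diff:
  assumes Psi: "sub_pm Psi M" and M: "M \<in> Mp"
    and minus: "(\<lambda>f. M f - Psi f) \<in> CKminus K (maxM Psi)"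
    and s: "s \<in> K" and ne: "atoms M \<noteq> {}"
  shows "maxM Psi s = maxM M s"
proof -
  have PsiMp: "Psi \<in> Mp" using Psi unfolding sub_pm_def by blast
  have le: "maxM Psi s \<le> maxM M s"
    using maxM_mono_atoms[OF PsiMp M sub_pm_atoms_subset[OF Psi]] .
  obtain g where g: "g \<in> atoms M" "g s = maxM M s"
    using maxM_attained[OF M ne] by blast
  show ?thesis
  proof (cases "g \<in> atoms Psi")
    case True
    then show ?thesis using maxM_upper[OF PsiMp True, of s] g le by auto
  next
    case False
    then have "g \<in> atoms (\<lambda>f. M f - Psi f)" using g unfolding atoms_def by auto
    then have "g s < maxM Psi s" using minus s unfolding CKminus_def lessK_def by auto
    then show ?thesis using g le by auto
  qed
qed

lemma extremal_part_unique:
  assumes M: "M \<in> Mp" and Psi: "sub_pm Psi M" and plus: "Psi \<in> CKplus K"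
    and minus: "(\<lambda>f. M f - Psi f) \<in> CKminus K (maxM Psi)"
  shows "Psi = extremal_part K (maxM M) M"
proof
  fix f
  have PsiMp: "Psi \<in> Mp" and Psi_le: "Psi f \<le> M f"
    using Psi unfolding sub_pm_def le_fun_def by auto
  show "Psi f = extremal_part K (maxM M) M f"
  proof (cases "lessK K (apply_bcontfun f) (maxM M)")
    case True
    have "Psi f = 0"
    proof (rule ccontr)
      assume "Psi f \<noteq> 0"
      then have f: "f \<in> atoms Psi" unfolding atoms_def by auto
      then have "atoms M \<noteq> {}" using sub_pm_atoms_subset[OF Psi] by auto
      then have "lessK K (apply_bcontfun f) (maxM Psi)"
        using True maxM_eq_if_CKminus_diff[OF Psi M minus] unfolding lessK_def by auto
      then show False using plus f unfolding CKplus_def by auto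
    qed
    then show ?thesis using True unfolding extremal_part_def by simp
  next
    case False
    have "Psi f = M f"
    proof (rule ccontr)
      assume "Psi f \<noteq> M f"
      then have "f \<in> atoms (\<lambda>f. M f - Psi f)" using Psi_le unfolding atoms_def by auto
      then have "lessK K (apply_bcontfun f) (maxM Psi)" using minus unfolding CKminus_def by auto
      then have "lessK K (apply_bcontfun f) (maxM M)"
        using maxM_mono_atoms[OF PsiMp M sub_pm_atoms_subset[OF Psi]]
        unfolding lessK_def by (meson less_le_trans)
      then show False using False by blast
    qed
    then show ?thesis using False unfolding extremal_part_def by simp
  qed
qed

theorem lemma1:
  fixes P :: "'b measure"
    and eta :: "'b \<Rightarrow> ('a::metric_space \<Rightarrow>\<^sub>C real)"
    and \<mu> :: "('a \<Rightarrow>\<^sub>C real) measure"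
    and Phi :: "'b \<Rightarrow> 'a pmeas"
    and K :: "'a set"
  assumes T_compact: "compact (UNIV :: 'a set)"
    and prob: "prob_space P"
    and eta_meas: "\<And>t. (\<lambda>\<omega>. apply_bcontfun (eta \<omega>) t) \<in> borel_measurable P"
    and eta_maxid: "max_id P eta"
    and vertex0: "\<And>t. vertex P eta t = 0"
    and expo: "exponent_measure P eta \<mu>"
    and prm: "poisson_random_measure P Phi \<mu>"
    and eta_max: "AE \<omega> in P. (\<forall>t. apply_bcontfun (eta \<omega>) t = maxM (Phi \<omega>) t)"
    and K_closed: "closed K"
  shows "AE \<omega> in P.
           (let Phi_plus = extremal_part K (apply_bcontfun (eta \<omega>)) (Phi \<omega>) in
              sub_pm Phi_plus (Phi \<omega>) \<and> Phi_plus \<in> CKplus K \<and>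
              (\<lambda>f. Phi \<omega> f - Phi_plus f) \<in> CKminus K (maxM Phi_plus) \<and>
              (\<forall>Psi. sub_pm Psi (Phi \<omega>) \<and> Psi \<in> CKplus K \<and>
                     (\<lambda>f. Phi \<omega> f - Psi f) \<in> CKminus K (maxM Psi) \<longrightarrow> Psi = Phi_plus))"
proof -
  have "AE \<omega> in P. Phi \<omega> \<in> Mp"
    using prm unfolding poisson_random_measure_def by (intro AE_I2) auto
  with eta_max show ?thesis
  proof eventually_elim
    case (elim \<omega>)
    then have "apply_bcontfun (eta \<omega>) = maxM (Phi \<omega>)" by auto
    with elim show ?case
      unfolding Let_def
      using sub_pm_extremal_part extremal_part_CKplus diff_extremal_part_CKminus
        extremal_part_unique by auto
  qed
qed

end
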